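(* For every pair $1\le i<j<k$, the vector $\vec \alpha^{\{i,j\}}$ is an element of $\Lambda$.
   Context: Let $g\ge 2$, $k\ge 3$ be integers, $\mathbb Z_g$ the integers mod $g$, and $d=\binom{k}{2}(g-1)$. Index the coordinates of $\mathbb R^d$ by pairs $(\{i,j\},a)$ with $1\le i<j\le k$ and $a\in\mathbb Z_g\setminus\{0\}$. Define $Z:(\mathbb Z_g)^k\to\mathbb R^d$ by $[Z(\vec x)]_{\{i,j\},a}=1-1/g$ if $x_i-x_j=a$ and $-1/g$ otherwise. Define $\Phi(\vec\theta)=\sum_{\vec x\in(\mathbb Z_g)^k} g^{-k}e^{i\vec\theta\cdot Z(\vec x)}$ for $\vec\theta\in\mathbb R^d$, and $\Lambda=\{\vec\theta\in\mathbb R^d: |\Phi(\vec\theta)|=1\}$. Let $\mathbbm{1}_{\{i,j\},a}$ be the standard basis vector of $\mathbb R^d$ with a $1$ in coordinate $(\{i,j\},a)$. For $1\le i<j<k$ (strict inequality $j<k$) define \[ \vec \alpha^{\{i,j\}} = \sum_{n=1}^{g-1} \frac{2\pi n}{g} \mathbbm{1}_{\{i,j\},n}+ \sum_{n=1}^{g-1} \frac{2 \pi(g-n)}{g} \mathbbm{1}_{\{i,k\},n} + \sum_{n=1}^{g-1} \frac{2 \pi n}{g} \mathbbm{1}_{\{j,k\},n},\] where $n$ is an integer in $[1,g-1]$ except in the subscripts, where it denotes the corresponding element of $\mathbb Z_g$. *)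

theory Defs
  imports Complex_Main "HOL-Library.FuncSet"
begin

(* Coordinates of R^d: triples (i,j,a) with 1 <= i < j <= k and a in {1..g-1}
   (a is the canonical representative of a nonzero element of Z_g).
   Vectors of R^d are functions on triples vanishing outside this index set. *)
definition coords :: "nat \<Rightarrow> nat \<Rightarrow> (nat \<times> nat \<times> nat) set" where
  "coords g k = {(i, j, a). 1 \<le> i \<and> i < j \<and> j \<le> k \<and> 1 \<le> a \<and> a \<le> g - 1}"

(* (Z_g)^k: functions {1..k} -> {0..g-1} (representatives of Z_g) *)
definition configs :: "nat \<Rightarrow> nat \<Rightarrow> (nat \<Rightarrow> nat) set" where
  "configs g k = PiE {1..k} (\<lambda>_. {0..<g})"

definition Zvec :: "nat \<Rightarrow> (nat \<Rightarrow> nat) \<Rightarrow> nat \<times> nat \<times> nat \<Rightarrow> real" where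
  "Zvec g x c = (case c of (i, j, a) \<Rightarrow>
     (if (int (x i) - int (x j)) mod int g = int a then 1 - 1 / real g else - 1 / real g))"

definition Phi :: "nat \<Rightarrow> nat \<Rightarrow> (nat \<times> nat \<times> nat \<Rightarrow> real) \<Rightarrow> complex" where
  "Phi g k \<theta> = (\<Sum>x\<in>configs g k. complex_of_real (1 / real g ^ k) *
      exp (\<i> * complex_of_real (\<Sum>c\<in>coords g k. \<theta> c * Zvec g x c)))"

definition Lambda :: "nat \<Rightarrow> nat \<Rightarrow> (nat \<times> nat \<times> nat \<Rightarrow> real) set" where
  "Lambda g k = {\<theta>. (\<forall>c. c \<notin> coords g k \<longrightarrow> \<theta> c = 0) \<and> cmod (Phi g k \<theta>) = 1}"

definition alpha :: "nat \<Rightarrow> nat \<Rightarrow> nat \<Rightarrow> nat \<Rightarrow> nat \<times> nat \<times> nat \<Rightarrow> real" where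
  "alpha g k i j c = (case c of (p, q, n) \<Rightarrow>
     (if 1 \<le> n \<and> n \<le> g - 1 then
        (if p = i \<and> q = j then 2 * pi * real n / real g
         else if p = i \<and> q = k then 2 * pi * (real g - real n) / real g
         else if p = j \<and> q = k then 2 * pi * real n / real g
         else 0)
      else 0))"

end

theory Submission
  imports Defs
begin

(* Write r_pq for the residue of x_p - x_q mod g. Pairing Z(x) with a vector supported on the
   coordinates of the pair {p,q} picks out its entry at r_pq (nothing when r_pq = 0), minus an
   average that does not depend on x. For alpha^{i,j} the picked entries add up to
   2 pi (r_ij - r_ik + r_jk) / g, plus 2 pi when r_ik <> 0, and this lies in 2 pi Z because
   r_ij + r_jk = r_ik mod g. So all summands of Phi(alpha) have the same phase and |Phi(alpha)| = 1. *)

definition block :: "nat \<Rightarrow> nat \<Rightarrow> nat \<Rightarrow> (nat \<Rightarrow> real) \<Rightarrow> nat \<times> nat \<times> nat \<Rightarrow> real" where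
  "block g p q h c = (case c of (p', q', n) \<Rightarrow>
     if p' = p \<and> q' = q \<and> 1 \<le> n \<and> n \<le> g - 1 then h n else 0)"

definition coeff_at_residue :: "nat \<Rightarrow> (nat \<Rightarrow> real) \<Rightarrow> int \<Rightarrow> real" where
  "coeff_at_residue g h D = (if D mod int g = 0 then 0 else h (nat (D mod int g)))"

lemma cmod_Phi_eq_1:
  assumes "g \<ge> 1"
    and "\<And>x. \<exists>m::int. (\<Sum>c\<in>coords g k. \<theta> c * Zvec g x c) = 2 * pi * m + K"
  shows "cmod (Phi g k \<theta>) = 1"
proof -
  have "exp (\<i> * complex_of_real (\<Sum>c\<in>coords g k. \<theta> c * Zvec g x c)) = cis K" for x
  proof -
    obtain m :: int where m: "(\<Sum>c\<in>coords g k. \<theta> c * Zvec g x c) = 2 * pi * m + K"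
      using assms(2) by blast
    have "cis (2 * pi * m + K) = cis K"
      by (simp add: cis_mult[symmetric])
    then show ?thesis
      by (simp add: m cis_conv_exp)
  qed
  moreover have "card (configs g k) = g ^ k"
    by (simp add: configs_def card_PiE)
  ultimately have "Phi g k \<theta> = cis K"
    using assms(1) by (simp add: Phi_def field_simps)
  then show ?thesis by simp
qed

lemma sum_indicator_residue:
  assumes "g \<ge> 1"
  shows "(\<Sum>n = 1..g - 1. if D mod int g = int n then h n else 0) = coeff_at_residue g h D"
proof -
  have r: "0 \<le> D mod int g" "D mod int g < int g"
    using assms by auto
  then have residue_mem: "nat (D mod int g) \<in> {1..g - 1} \<longleftrightarrow> D mod int g \<noteq> 0"
    by auto
  have "(\<Sum>n = 1..g - 1. if D mod int g = int n then h n else 0)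
      = (\<Sum>n = 1..g - 1. if nat (D mod int g) = n then h n else 0)"
    using r by (intro sum.cong) auto
  also have "\<dots> = (if nat (D mod int g) \<in> {1..g - 1} then h (nat (D mod int g)) else 0)"
    by (rule sum.delta') simp
  also have "\<dots> = coeff_at_residue g h D"
    by (simp only: residue_mem) (simp add: coeff_at_residue_def)
  finally show ?thesis .
qed

lemma sum_block_Zvec:
  assumes "g \<ge> 1" "1 \<le> p" "p < q" "q \<le> k"
  shows "(\<Sum>c\<in>coords g k. block g p q h c * Zvec g x c)
         = coeff_at_residue g h (int (x p) - int (x q)) - (\<Sum>n = 1..g - 1. h n) / g"
proof -
  let ?D = "int (x p) - int (x q)"
  have "finite (coords g k)"
    by (rule finite_subset[of _ "{1..k} \<times> {1..k} \<times> {1..g - 1}"]) (auto simp: coords_def)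
  moreover have "(\<lambda>n. (p, q, n)) ` {1..g - 1} \<subseteq> coords g k"
    using assms by (auto simp: coords_def)
  ultimately have "(\<Sum>c\<in>coords g k. block g p q h c * Zvec g x c)
      = (\<Sum>c\<in>(\<lambda>n. (p, q, n)) ` {1..g - 1}. block g p q h c * Zvec g x c)"
    by (intro sum.mono_neutral_right) (auto simp: block_def)
  also have "\<dots> = (\<Sum>n = 1..g - 1. (if ?D mod int g = int n then h n else 0) - h n / g)"
    by (subst sum.reindex) (auto simp: inj_on_def block_def Zvec_def right_diff_distrib intro!: sum.cong)
  also have "\<dots> = coeff_at_residue g h ?D - (\<Sum>n = 1..g - 1. h n) / g"
    by (simp only: sum_subtractf sum_divide_distrib sum_indicator_residue[OF assms(1)])
  finally show ?thesis .
qed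

lemma alpha_eq_blocks:
  assumes "i < j" "j < k"
  shows "alpha g k i j = (\<lambda>c. block g i j (\<lambda>n. 2 * pi * n / g) c
                            + block g i k (\<lambda>n. 2 * pi * (real g - real n) / g) c
                            + block g j k (\<lambda>n. 2 * pi * n / g) c)"
  using assms by (auto simp: alpha_def block_def fun_eq_iff)

lemma coeff_at_residue_linear:
  assumes "g \<ge> 1"
  shows "coeff_at_residue g (\<lambda>n. 2 * pi * n / g) D = 2 * pi * (D mod int g) / g"
  using assms by (simp add: coeff_at_residue_def)

lemma coeff_at_residue_reflected:
  assumes "g \<ge> 1"
  shows "coeff_at_residue g (\<lambda>n. 2 * pi * (real g - real n) / g) D
         = 2 * pi * (if D mod int g = 0 then 0 else 1) - 2 * pi * (D mod int g) / g"
  using assms by (simp add: coeff_at_residue_def right_diff_distrib diff_divide_distrib)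

lemma mod_add_mod_diff_multiple:
  fixes a b m :: int
  obtains t where "real_of_int (a mod m) + real_of_int (b mod m) - real_of_int ((a + b) mod m)
                   = real_of_int m * real_of_int t"
proof -
  have "m dvd a mod m + b mod m - (a + b) mod m"
    by (simp add: mod_eq_dvd_iff[symmetric] mod_add_eq)
  then obtain t where "a mod m + b mod m - (a + b) mod m = m * t" ..
  then have "real_of_int (a mod m + b mod m - (a + b) mod m) = real_of_int (m * t)"
    by (rule arg_cong)
  then show ?thesis
    using that[of t] by simp
qed

lemma coeff_at_residue_phases_sum:
  assumes "g \<ge> 1" "D\<^sub>1 + D\<^sub>3 = D\<^sub>2"
  shows "\<exists>m::int. coeff_at_residue g (\<lambda>n. 2 * pi * n / g) D\<^sub>1
               + coeff_at_residue g (\<lambda>n. 2 * pi * (real g - real n) / g) D\<^sub>2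
               + coeff_at_residue g (\<lambda>n. 2 * pi * n / g) D\<^sub>3 = 2 * pi * m"
proof -
  let ?r = "\<lambda>D. real_of_int (D mod int g)"
  obtain t where t: "?r D\<^sub>1 + ?r D\<^sub>3 - ?r D\<^sub>2 = real g * real_of_int t"
    using mod_add_mod_diff_multiple[of D\<^sub>1 "int g" D\<^sub>3] assms(2) by auto
  define b :: int where "b = (if D\<^sub>2 mod int g = 0 then 0 else 1)"
  have "coeff_at_residue g (\<lambda>n. 2 * pi * n / g) D\<^sub>1
        + coeff_at_residue g (\<lambda>n. 2 * pi * (real g - real n) / g) D\<^sub>2
        + coeff_at_residue g (\<lambda>n. 2 * pi * n / g) D\<^sub>3
      = 2 * pi * b + 2 * pi * (?r D\<^sub>1 + ?r D\<^sub>3 - ?r D\<^sub>2) / g"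
    unfolding coeff_at_residue_linear[OF assms(1)] coeff_at_residue_reflected[OF assms(1)] b_def
    by (simp add: add_divide_distrib diff_divide_distrib right_diff_distrib distrib_left)
  also have "\<dots> = 2 * pi * (b + t)"
    using assms(1) by (simp add: t distrib_left)
  finally show ?thesis
    by (metis of_int_add)
qed

theorem proposition2p8:
  fixes g k i j :: nat
  assumes "g \<ge> 2" and "k \<ge> 3" and "1 \<le> i" and "i < j" and "j < k"
  shows "alpha g k i j \<in> Lambda g k"
proof -
  let ?c\<^sub>1 = "\<lambda>n::nat. 2 * pi * n / g" and ?c\<^sub>2 = "\<lambda>n::nat. 2 * pi * (real g - real n) / g"
  define K where "K = - (sum ?c\<^sub>1 {1..g - 1} + sum ?c\<^sub>2 {1..g - 1} + sum ?c\<^sub>1 {1..g - 1}) / g"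
  have "\<exists>m::int. (\<Sum>c\<in>coords g k. alpha g k i j c * Zvec g x c) = 2 * pi * m + K" for x
  proof -
    have "(\<Sum>c\<in>coords g k. alpha g k i j c * Zvec g x c)
        = coeff_at_residue g ?c\<^sub>1 (int (x i) - int (x j))
          + coeff_at_residue g ?c\<^sub>2 (int (x i) - int (x k))
          + coeff_at_residue g ?c\<^sub>1 (int (x j) - int (x k)) + K"
      using assms by (simp add: alpha_eq_blocks distrib_right sum.distrib sum_block_Zvec
          K_def diff_divide_distrib add_divide_distrib)
    moreover obtain m :: int where "coeff_at_residue g ?c\<^sub>1 (int (x i) - int (x j))
          + coeff_at_residue g ?c\<^sub>2 (int (x i) - int (x k))
          + coeff_at_residue g ?c\<^sub>1 (int (x j) - int (x k)) = 2 * pi * m"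
      using coeff_at_residue_phases_sum[of g] assms(1) by fastforce
    ultimately show ?thesis by auto
  qed
  then have "cmod (Phi g k (alpha g k i j)) = 1"
    using assms(1) by (intro cmod_Phi_eq_1) auto
  moreover have "alpha g k i j c = 0" if "c \<notin> coords g k" for c
    using that assms by (auto simp: alpha_def coords_def split: prod.splits)
  ultimately show ?thesis
    by (simp add: Lambda_def)
qed

end
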